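(* Let $(X,d)$ be a compact metric space, $\mathbb{F}=\{f_n:n\in\mathbb{N}\}$ a commutative family of continuous bijective self-maps of $X$, and let $\mathbb{G}$ be a finite rearrangement of $\mathbb{F}$. Then for $x,y\in X$, $(x,y)$ is proximal for $(X,\mathbb{F})$ if and only if $(x,y)$ is proximal for $(X,\mathbb{G})$.
   Context: For a family $\mathbb{H}=\{h_n\}$ write $\omega_n=h_n\circ\cdots\circ h_1$; a pair $(x,y)$ is proximal for $(X,\mathbb{H})$ if $\liminf_{n\to\infty}d(\omega_n(x),\omega_n(y))=0$. $\mathbb{F}$ is commutative if $f_i\circ f_j=f_j\circ f_i$ for all $i,j$. $\mathbb{G}=\{g_n\}$ is a finite rearrangement of $\mathbb{F}$ if $g_n=f_{\pi(n)}$ for a bijection $\pi:\mathbb{N}\to\mathbb{N}$ fixing all but finitely many $n$. *)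

theory Defs
  imports "HOL-Analysis.Analysis"
begin

text \<open>Family indexed by nat (h 0, h 1, ... corresponds to h_1, h_2, ...).
 omega h n = h (n-1) o ... o h 0, i.e. the paper's omega_n.\<close>
fun omega :: "(nat \<Rightarrow> 'a \<Rightarrow> 'a) \<Rightarrow> nat \<Rightarrow> 'a \<Rightarrow> 'a" where
  "omega h 0 = id"
| "omega h (Suc n) = h n \<circ> omega h n"

definition proximal :: "(nat \<Rightarrow> 'a::metric_space \<Rightarrow> 'a) \<Rightarrow> 'a \<Rightarrow> 'a \<Rightarrow> bool" where
  "proximal h x y \<longleftrightarrow> liminf (\<lambda>n. ereal (dist (omega h n x) (omega h n y))) = 0"

definition finite_rearrangement :: "(nat \<Rightarrow> 'b) \<Rightarrow> (nat \<Rightarrow> 'b) \<Rightarrow> bool" where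
  "finite_rearrangement g f \<longleftrightarrow>
     (\<exists>\<pi>. bij \<pi> \<and> finite {n. \<pi> n \<noteq> n} \<and> (\<forall>n. g n = f (\<pi> n)))"

end

theory Submission
  imports Defs
begin

text \<open>Commuting maps can be composed in any order, so once n exceeds every index moved by the
  rearrangement, \<open>\<omega>\<^sub>n\<close> is the same map for both families. The distance sequences of the two
  families therefore agree from some index on, and a liminf only depends on such a tail.\<close>

lemma omega_closed:
  assumes "\<And>i z. z \<in> X \<Longrightarrow> h i z \<in> X" and "z \<in> X"
  shows "omega h n z \<in> X"
  using assms by (induction n) auto

lemma omega_cong:
  assumes "\<And>i. i < n \<Longrightarrow> h i = k i"
  shows "omega h n = omega k n"
  using assms by (induction n) auto

lemma omega_Suc_extract:
  assumes comm: "\<And>i j z. z \<in> X \<Longrightarrow> h i (h j z) = h j (h i z)"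
    and closed: "\<And>i z. z \<in> X \<Longrightarrow> h i z \<in> X"
    and "m \<le> n" and "z \<in> X"
  shows "omega h (Suc n) z = h m (omega (\<lambda>i. h (if i < m then i else Suc i)) n z)"
  using \<open>m \<le> n\<close>
proof (induction n)
  case 0
  then show ?case by simp
next
  case (Suc n)
  let ?h' = "\<lambda>i. h (if i < m then i else Suc i)"
  show ?case
  proof (cases "m = Suc n")
    case True
    have "omega ?h' (Suc n) = omega h (Suc n)"
      by (rule omega_cong) (simp add: True)
    then show ?thesis using True by simp
  next
    case False
    then have "m \<le> n" using Suc.prems by simp
    have "omega h (Suc (Suc n)) z = h (Suc n) (h m (omega ?h' n z))"
      using Suc.IH[OF \<open>m \<le> n\<close>] by simp
    also have "\<dots> = h m (h (Suc n) (omega ?h' n z))"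
      using comm omega_closed[OF closed \<open>z \<in> X\<close>] by simp
    finally show ?thesis using \<open>m \<le> n\<close> by simp
  qed
qed

lemma omega_reindex:
  assumes comm: "\<And>i j z. z \<in> X \<Longrightarrow> f i (f j z) = f j (f i z)"
    and closed: "\<And>i z. z \<in> X \<Longrightarrow> f i z \<in> X"
    and "inj_on \<sigma> {..<N}" and "\<sigma> ` {..<N} \<subseteq> {..<N}" and "z \<in> X"
  shows "omega (\<lambda>i. f (\<sigma> i)) N z = omega f N z"
  using assms(3-)
proof (induction N arbitrary: \<sigma>)
  case 0
  then show ?case by simp
next
  case (Suc N)
  have "\<sigma> ` {..<Suc N} = {..<Suc N}"
    using endo_inj_surj[of "{..<Suc N}" \<sigma>] Suc.prems(1,2) by simp
  then obtain m where m: "m < Suc N" "\<sigma> m = N"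
    by (metis imageE lessThan_iff lessI)
  define s where "s i = (if i < m then i else Suc i)" for i
  have s_into: "s ` {..<N} \<subseteq> {..<Suc N} - {m}"
    by (auto simp: s_def)
  have "inj_on s {..<N}"
    by (auto simp: inj_on_def s_def split: if_splits)
  then have inj': "inj_on (\<sigma> \<circ> s) {..<N}"
    using s_into by (intro comp_inj_on) (auto intro: inj_on_subset[OF Suc.prems(1)])
  have img': "(\<sigma> \<circ> s) ` {..<N} \<subseteq> {..<N}"
  proof
    fix y assume "y \<in> (\<sigma> \<circ> s) ` {..<N}"
    then obtain i where i: "i < N" "y = \<sigma> (s i)" by auto
    then have "s i < Suc N" "s i \<noteq> m" using s_into by auto
    then have "\<sigma> (s i) \<noteq> N" "\<sigma> (s i) < Suc N"
      using Suc.prems(1,2) m inj_on_eq_iff[OF Suc.prems(1)] by auto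
    then show "y \<in> {..<N}" using i by simp
  qed
  have "omega (\<lambda>i. f (\<sigma> i)) (Suc N) z = f N (omega (\<lambda>i. f ((\<sigma> \<circ> s) i)) N z)"
    using omega_Suc_extract[of X "\<lambda>i. f (\<sigma> i)" m N z] comm closed m Suc.prems(3)
    by (simp add: s_def)
  also have "\<dots> = f N (omega f N z)"
    using Suc.IH[OF inj' img' Suc.prems(3)] by simp
  finally show ?case by simp
qed

lemma bij_permutes_support: "bij p \<Longrightarrow> p permutes {x. p x \<noteq> x}"
  by (simp add: permutes_def bij_iff)

lemma finite_rearrangement_eventually_omega_eq:
  assumes comm: "\<And>i j z. z \<in> X \<Longrightarrow> f i (f j z) = f j (f i z)"
    and closed: "\<And>i z. z \<in> X \<Longrightarrow> f i z \<in> X"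
    and "finite_rearrangement g f"
  shows "\<forall>\<^sub>F n in sequentially. \<forall>z\<in>X. omega g n z = omega f n z"
proof -
  obtain \<pi> where \<pi>: "bij \<pi>" "finite {n. \<pi> n \<noteq> n}" and g: "g = (\<lambda>n. f (\<pi> n))"
    using assms(3) unfolding finite_rearrangement_def by blast
  obtain N where "{n. \<pi> n \<noteq> n} \<subseteq> {..<N}"
    using finite_nat_bounded[OF \<pi>(2)] by blast
  then have perm: "\<pi> permutes {..<N}"
    using permutes_subset bij_permutes_support[OF \<pi>(1)] by blast
  have "omega g n z = omega f n z" if "N \<le> n" "z \<in> X" for n z
    using \<open>N \<le> n\<close>
  proof (induction n rule: dec_induct)
    case base
    show ?case
      unfolding g using omega_reindex[of X f \<pi> N z] comm closed \<open>z \<in> X\<close>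
      by (simp add: permutes_inj_on[OF perm] permutes_image[OF perm])
  next
    case (step n)
    then show ?case by (simp add: g permutes_not_in[OF perm])
  qed
  then show ?thesis
    unfolding eventually_sequentially by blast
qed

lemma proximal_eventually_cong:
  assumes "\<forall>\<^sub>F n in sequentially. omega g n x = omega f n x \<and> omega g n y = omega f n y"
  shows "proximal g x y \<longleftrightarrow> proximal f x y"
proof -
  have tail: "\<forall>\<^sub>F n in sequentially. ereal (dist (omega g n x) (omega g n y))
                              = ereal (dist (omega f n x) (omega f n y))"
    using assms by eventually_elim simp
  show ?thesis
    unfolding proximal_def Liminf_eq[OF tail] ..
qed

theorem mainTheorem10:
  fixes X :: "'a::metric_space set" and f g :: "nat \<Rightarrow> 'a \<Rightarrow> 'a"
  assumes "compact X"
    and "\<And>n. continuous_on X (f n)"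
    and "\<And>n. bij_betw (f n) X X"
    and "\<And>i j. \<forall>z\<in>X. f i (f j z) = f j (f i z)"
    and "finite_rearrangement g f"
    and "x \<in> X" and "y \<in> X"
  shows "proximal f x y \<longleftrightarrow> proximal g x y"
proof -
  have closed: "\<And>i z. z \<in> X \<Longrightarrow> f i z \<in> X"
    using assms(3) bij_betwE by blast
  have "\<forall>\<^sub>F n in sequentially. \<forall>z\<in>X. omega g n z = omega f n z"
    using finite_rearrangement_eventually_omega_eq[OF _ closed assms(5)] assms(4) by blast
  then have "\<forall>\<^sub>F n in sequentially. omega g n x = omega f n x \<and> omega g n y = omega f n y"
    by eventually_elim (simp add: \<open>x \<in> X\<close> \<open>y \<in> X\<close>)
  then show ?thesis
    using proximal_eventually_cong by blast
qed

end
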